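(* Let $\mathcal{R}$ be a tolerance relation on $X=\{1,\dots,n\}$ with chordal graph $G(\mathcal{R})$ and set of maximal cliques $\mathcal{C}$. A nonzero element $(x_{ij})\in E(\mathcal{R})^d_+$ generates an extremal ray of the cone $E(\mathcal{R})^d_+$ if and only if both of the following hold: (1) for every $C\in\mathcal{C}$ the matrix $(x_{ij})_{i,j\in C}$ has rank one or zero; (2) the subgraph of $G(\mathcal{R})$ induced by the vertex set $\{i\in X\mid x_{ii}\neq 0\}$ is connected.
   Context: A tolerance relation on $X=\{1,\dots,n\}$ is a reflexive symmetric relation $\mathcal{R}\subseteq X\times X$; its graph $G(\mathcal{R})$ has vertex set $X$ and an edge between distinct $i,j$ iff $(i,j)\in\mathcal{R}$. A graph is chordal if every cycle of length at least 4 has a chord. $E(\mathcal{R})=\{(x_{ij})\in M_n(\mathbb{C})\mid x_{ij}=0\text{ if }(i,j)\notin\mathcal{R}\}$. The dual $E(\mathcal{R})^d$ is identified with the vector space $E(\mathcal{R})$, with positive cone $E(\mathcal{R})^d_+=\{M\in E(\mathcal{R})\mid \exists N\in M_n(\mathbb{C})\text{ with }N_{ij}=0\text{ for all }(i,j)\in\mathcal{R},\ M+N\text{ positive semidefinite}\}$. A ray is a set $\{\lambda\varphi\mid\lambda\ge0\}$ with $0\neq\varphi$ in the cone; it is extremal if whenever $\varphi_1,\varphi_2$ are in the cone and $\varphi_1+\varphi_2$ lies in the ray, both $\varphi_1,\varphi_2$ lie in the ray. *)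

theory Defs
  imports Complex_Main "Jordan_Normal_Form.DL_Rank_Submatrix"
begin

text \<open>The ground set X = {1,..,n} is represented by the index set {0..<n}
  (JNF matrices are 0-indexed).\<close>

definition tolerance_rel :: "nat \<Rightarrow> (nat \<times> nat) set \<Rightarrow> bool" where
  "tolerance_rel n R \<longleftrightarrow> R \<subseteq> {0..<n} \<times> {0..<n}
     \<and> (\<forall>i<n. (i, i) \<in> R) \<and> (\<forall>i j. (i, j) \<in> R \<longrightarrow> (j, i) \<in> R)"

definition adj :: "(nat \<times> nat) set \<Rightarrow> nat \<Rightarrow> nat \<Rightarrow> bool" where
  "adj R i j \<longleftrightarrow> i \<noteq> j \<and> (i, j) \<in> R"

definition is_cycle :: "nat \<Rightarrow> (nat \<times> nat) set \<Rightarrow> nat list \<Rightarrow> bool" where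
  "is_cycle n R vs \<longleftrightarrow> length vs \<ge> 3 \<and> distinct vs \<and> set vs \<subseteq> {0..<n}
     \<and> (\<forall>i<length vs. adj R (vs ! i) (vs ! ((i + 1) mod length vs)))"

definition has_chord :: "(nat \<times> nat) set \<Rightarrow> nat list \<Rightarrow> bool" where
  "has_chord R vs \<longleftrightarrow> (\<exists>i<length vs. \<exists>j<length vs.
     j \<noteq> (i + 1) mod length vs \<and> i \<noteq> (j + 1) mod length vs \<and> i \<noteq> j
     \<and> adj R (vs ! i) (vs ! j))"

definition chordal :: "nat \<Rightarrow> (nat \<times> nat) set \<Rightarrow> bool" where
  "chordal n R \<longleftrightarrow> (\<forall>vs. is_cycle n R vs \<and> length vs \<ge> 4 \<longrightarrow> has_chord R vs)"

definition is_clique :: "nat \<Rightarrow> (nat \<times> nat) set \<Rightarrow> nat set \<Rightarrow> bool" where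
  "is_clique n R C \<longleftrightarrow> C \<subseteq> {0..<n} \<and> (\<forall>i\<in>C. \<forall>j\<in>C. i \<noteq> j \<longrightarrow> adj R i j)"

definition maximal_cliques :: "nat \<Rightarrow> (nat \<times> nat) set \<Rightarrow> nat set set" where
  "maximal_cliques n R = {C. is_clique n R C \<and> (\<forall>D. is_clique n R D \<and> C \<subseteq> D \<longrightarrow> D = C)}"

definition psd :: "nat \<Rightarrow> complex mat \<Rightarrow> bool" where
  "psd n A \<longleftrightarrow> A \<in> carrier_mat n n \<and>
     (\<forall>v \<in> carrier_vec n. (\<Sum>i<n. \<Sum>j<n. cnj (v $ i) * A $$ (i, j) * v $ j) \<in> \<real>
        \<and> 0 \<le> Re (\<Sum>i<n. \<Sum>j<n. cnj (v $ i) * A $$ (i, j) * v $ j))"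

definition E_space :: "nat \<Rightarrow> (nat \<times> nat) set \<Rightarrow> complex mat set" where
  "E_space n R = {M \<in> carrier_mat n n. \<forall>i<n. \<forall>j<n. (i, j) \<notin> R \<longrightarrow> M $$ (i, j) = 0}"

text \<open>The positive cone E(R)^d_+ (dual identified with E(R)).\<close>
definition dual_cone :: "nat \<Rightarrow> (nat \<times> nat) set \<Rightarrow> complex mat set" where
  "dual_cone n R = {M \<in> E_space n R. \<exists>N \<in> carrier_mat n n.
       (\<forall>i<n. \<forall>j<n. (i, j) \<in> R \<longrightarrow> N $$ (i, j) = 0) \<and> psd n (M + N)}"

definition ray :: "complex mat \<Rightarrow> complex mat set" where
  "ray \<phi> = {complex_of_real c \<cdot>\<^sub>m \<phi> | c. c \<ge> 0}"

definition extremal_ray :: "complex mat set \<Rightarrow> complex mat \<Rightarrow> bool" where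
  "extremal_ray K \<phi> \<longleftrightarrow> \<phi> \<in> K \<and> \<phi> \<noteq> 0\<^sub>m (dim_row \<phi>) (dim_col \<phi>) \<and>
     (\<forall>\<phi>1 \<in> K. \<forall>\<phi>2 \<in> K. \<phi>1 + \<phi>2 \<in> ray \<phi> \<longrightarrow> \<phi>1 \<in> ray \<phi> \<and> \<phi>2 \<in> ray \<phi>)"

definition induced_connected :: "(nat \<times> nat) set \<Rightarrow> nat set \<Rightarrow> bool" where
  "induced_connected R S \<longleftrightarrow>
     (\<forall>u\<in>S. \<forall>v\<in>S. (u, v) \<in> {(i, j). i \<in> S \<and> j \<in> S \<and> adj R i j}\<^sup>*)"

end

theory Submission
  imports Defs
begin

text \<open>
  An element M of the cone is the restriction to R of a positive semidefinite matrix P.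

  If M is extremal, choose k with M_kk \<noteq> 0 and split P into its rank-one Schur part
  P e_k e_k* P / P_kk plus the positive semidefinite Schur complement. Restricting both
  to R writes M as a sum in the cone, so M agrees on R, in particular on every clique, with
  a multiple of a rank-one matrix. Likewise, cutting M along a connected component of the
  support of its diagonal would split M inside the cone.

  Conversely, let A + B = c M with A, B in the cone. For an edge {i, j} between vertices
  with M_ii, M_jj \<noteq> 0 the 2x2 block of M is singular (it lies in a maximal clique),
  so its kernel vector annihilates the positive semidefinite 2x2 blocks of A and B, and A is
  proportional to M on the edge with ratio A_ii / M_ii. Connectedness makes this ratio
  global, and the rows with M_ii = 0 vanish in A as well.
\<close>

section \<open>Positive semidefinite 2x2 forms\<close>

definition form2 :: "complex \<Rightarrow> complex \<Rightarrow> complex \<Rightarrow> complex \<Rightarrow> complex \<Rightarrow> complex \<Rightarrow> complex" where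
  "form2 p q r s x y = cnj x * p * x + cnj x * q * y + cnj y * r * x + cnj y * s * y"

definition psd2 :: "complex \<Rightarrow> complex \<Rightarrow> complex \<Rightarrow> complex \<Rightarrow> bool" where
  "psd2 p q r s \<longleftrightarrow> (\<forall>x y. form2 p q r s x y \<in> \<real> \<and> 0 \<le> Re (form2 p q r s x y))"

lemma psd2_hermitian:
  assumes "psd2 p q r s"
  shows "r = cnj q \<and> Im p = 0 \<and> Im s = 0"
proof -
  have "Im (form2 p q r s x y) = 0" for x y
    using assms complex_is_Real_iff unfolding psd2_def by blast
  from this[of 1 0] this[of 0 1] this[of 1 1] this[of 1 \<i>] show ?thesis
    by (auto simp: form2_def complex_eq_iff algebra_simps)
qed

lemma linear_plus_quadratic_nonneg_imp_zero:
  fixes K L :: real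
  assumes "\<And>e. 0 \<le> 2 * e * K + e\<^sup>2 * L"
  shows "K = 0"
proof (rule ccontr)
  assume "K \<noteq> 0"
  define t where "t = 1 / (\<bar>L\<bar> + 1)"
  have t: "t > 0" "t * L < 1"
    unfolding t_def by (auto simp: field_simps abs_if)
  have "0 \<le> 2 * (- t * K) * K + (- t * K)\<^sup>2 * L" by (rule assms)
  also have "\<dots> = t * K\<^sup>2 * (t * L - 2)" by (simp add: algebra_simps power2_eq_square)
  also have "\<dots> < 0" using t \<open>K \<noteq> 0\<close> by (simp add: mult_pos_neg)
  finally show False by simp
qed

lemma psd2_kernel:
  assumes psd: "psd2 p q r s" and zero: "Re (form2 p q r s x0 y0) = 0"
  shows "p * x0 + q * y0 = 0 \<and> r * x0 + s * y0 = 0"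
proof -
  obtain P S where p: "p = of_real P" and s: "s = of_real S" and r: "r = cnj q"
    using psd2_hermitian[OF psd] by (metis complex_is_Real_iff of_real_Re)
  define u where "u = p * x0 + q * y0"
  define v where "v = r * x0 + s * y0"
  \<comment> \<open>(x0, y0) minimises the form, so its first variation in the direction (u, v) vanishes\<close>
  have "0 \<le> Re (form2 p q r s (x0 + of_real e * u) (y0 + of_real e * v))" for e
    using psd unfolding psd2_def by blast
  also have "Re (form2 p q r s (x0 + of_real e * u) (y0 + of_real e * v))
      = Re (form2 p q r s x0 y0) + 2 * e * ((cmod u)\<^sup>2 + (cmod v)\<^sup>2) + e\<^sup>2 * Re (form2 p q r s u v)" for e
    unfolding form2_def cmod_power2 u_def v_def p s r by (simp add: algebra_simps power2_eq_square)
  finally have "(cmod u)\<^sup>2 + (cmod v)\<^sup>2 = 0"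
    using zero by (intro linear_plus_quadratic_nonneg_imp_zero[where L = "Re (form2 p q r s u v)"]) simp
  then show ?thesis unfolding u_def v_def
    by (metis add_nonneg_eq_0_iff norm_eq_zero zero_le_power2 power_eq_0_iff)
qed

lemma psd2_zero_diag:
  assumes "psd2 p q r s" "p = 0"
  shows "q = 0 \<and> r = 0"
proof -
  have "Re (form2 p q r s 1 0) = 0" using assms(2) by (simp add: form2_def)
  then have "r = 0" using psd2_kernel[OF assms(1), of 1 0] by simp
  then show ?thesis using psd2_hermitian[OF assms(1)] by (metis complex_cnj_cnj complex_cnj_zero)
qed

lemma psd2_summand_of_singular:
  assumes psd: "psd2 a b b' d" "psd2 a1 b1 b1' d1" "psd2 a2 b2 b2' d2"
    and sum: "a1 + a2 = c * a" "b1 + b2 = c * b" "b1' + b2' = c * b'" "d1 + d2 = c * d"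
    and singular: "a * d = b * b'" and nonzero: "a \<noteq> 0" "d \<noteq> 0"
  shows "b1 = a1 / a * b \<and> d1 / d = a1 / a"
proof -
  \<comment> \<open>(b, -a) spans the kernel of the singular block of M\<close>
  have "form2 a1 b1 b1' d1 b (-a) + form2 a2 b2 b2' d2 b (-a) = form2 (c * a) (c * b) (c * b') (c * d) b (-a)"
    unfolding sum[symmetric] by (simp add: form2_def algebra_simps)
  also have "\<dots> = c * form2 a b b' d b (-a)" by (simp add: form2_def algebra_simps)
  also have "form2 a b b' d b (-a) = cnj a * (a * d - b * b')" by (simp add: form2_def algebra_simps)
  finally have "Re (form2 a1 b1 b1' d1 b (-a) + form2 a2 b2 b2' d2 b (-a)) = 0"
    using singular by simp
  then have "Re (form2 a1 b1 b1' d1 b (-a)) = 0"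
    using psd(2,3) unfolding psd2_def by (smt (verit) plus_complex.sel(1))
  from psd2_kernel[OF psd(2) this] have k: "a1 * b = b1 * a" "b1' * b = d1 * a"
    by (simp_all add: algebra_simps)
  have h1: "b1' = cnj b1" "cnj a1 = a1" and h: "b' = cnj b" "cnj a = a"
    using psd2_hermitian[OF psd(2)] psd2_hermitian[OF psd(1)] by (simp_all add: complex_eq_iff)
  have b1: "b1 = a1 / a * b" using k(1) nonzero by (simp add: field_simps)
  have "d1 * a = b1' * b" using k(2) by simp
  also have "\<dots> = a1 / a * (b * b')" using b1 h1 h by simp
  also have "\<dots> = a1 * d" using singular[symmetric] nonzero by simp
  finally have "d1 * a = a1 * d" .
  then show ?thesis using b1 nonzero by (simp add: field_simps)
qed

section \<open>Quadratic forms and the cone\<close>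

definition qform :: "nat \<Rightarrow> complex mat \<Rightarrow> (nat \<Rightarrow> complex) \<Rightarrow> (nat \<Rightarrow> complex) \<Rightarrow> complex" where
  "qform n A f g = (\<Sum>i<n. \<Sum>j<n. cnj (f i) * A $$ (i, j) * g j)"

lemma psd_iff_qform:
  "psd n A \<longleftrightarrow> A \<in> carrier_mat n n \<and> (\<forall>f. qform n A f f \<in> \<real> \<and> 0 \<le> Re (qform n A f f))"
proof -
  let ?nonneg = "\<lambda>z :: complex. z \<in> \<real> \<and> 0 \<le> Re z"
  have "qform n A f f = qform n A (($) (vec n f)) (($) (vec n f))" for f
    unfolding qform_def by (intro sum.cong refl) simp
  then have "(\<forall>v\<in>carrier_vec n. ?nonneg (qform n A (($) v) (($) v))) \<longleftrightarrow> (\<forall>f. ?nonneg (qform n A f f))"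
    using vec_carrier by metis
  then show ?thesis
    unfolding psd_def qform_def[symmetric] by blast
qed

lemma qform_supported:
  assumes "S \<subseteq> {..<n}" "\<And>i. i \<notin> S \<Longrightarrow> f i = 0" "\<And>i. i \<notin> S \<Longrightarrow> g i = 0"
  shows "qform n A f g = (\<Sum>i\<in>S. \<Sum>j\<in>S. cnj (f i) * A $$ (i, j) * g j)"
proof -
  have "qform n A f g = (\<Sum>i<n. \<Sum>j\<in>S. cnj (f i) * A $$ (i, j) * g j)"
    unfolding qform_def using assms by (intro sum.cong refl sum.mono_neutral_right) auto
  also have "\<dots> = (\<Sum>i\<in>S. \<Sum>j\<in>S. cnj (f i) * A $$ (i, j) * g j)"
    using assms by (intro sum.mono_neutral_right) auto
  finally show ?thesis .
qed

lemma psd_principal_psd2: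
  assumes "psd n A" "i < n" "j < n" "i \<noteq> j"
  shows "psd2 (A $$ (i, i)) (A $$ (i, j)) (A $$ (j, i)) (A $$ (j, j))"
  unfolding psd2_def
proof (intro allI)
  fix x y :: complex
  define f where "f k = (if k = i then x else if k = j then y else 0)" for k
  have "qform n A f f = form2 (A $$ (i, i)) (A $$ (i, j)) (A $$ (j, i)) (A $$ (j, j)) x y"
    using assms(2-4) by (subst qform_supported[where S = "{i, j}"]) (auto simp: f_def form2_def)
  then show "form2 (A $$ (i, i)) (A $$ (i, j)) (A $$ (j, i)) (A $$ (j, j)) x y \<in> \<real> \<and>
      0 \<le> Re (form2 (A $$ (i, i)) (A $$ (i, j)) (A $$ (j, i)) (A $$ (j, j)) x y)"
    using assms(1) unfolding psd_iff_qform by metis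
qed

lemma psd_diag_nonneg:
  assumes "psd n A" "i < n"
  shows "Im (A $$ (i, i)) = 0 \<and> 0 \<le> Re (A $$ (i, i))"
proof -
  define f where "f k = (if k = i then 1 else 0 :: complex)" for k
  have "qform n A f f = A $$ (i, i)"
    using assms(2) by (subst qform_supported[where S = "{i}"]) (auto simp: f_def)
  then show ?thesis using assms(1) unfolding psd_iff_qform complex_is_Real_iff by metis
qed

lemma psd_hermitian:
  assumes "psd n A" "i < n" "j < n"
  shows "A $$ (j, i) = cnj (A $$ (i, j))"
proof (cases "i = j")
  case True
  then show ?thesis using psd_diag_nonneg[OF assms(1,2)] by (simp add: complex_eq_iff)
next
  case False
  then show ?thesis using psd2_hermitian psd_principal_psd2[OF assms False] by blast
qed

definition mask :: "nat \<Rightarrow> (nat \<times> nat) set \<Rightarrow> complex mat \<Rightarrow> complex mat" where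
  "mask n S A = mat n n (\<lambda>(i, j). if (i, j) \<in> S then A $$ (i, j) else 0)"

lemma mask_carrier [simp]: "mask n S A \<in> carrier_mat n n"
  by (simp add: mask_def)

lemma psd_mask_square:
  assumes "psd n A"
  shows "psd n (mask n (T \<times> T) A)"
proof -
  have [simp]: "qform n (mask n (T \<times> T) A) f f
      = qform n A (\<lambda>k. if k \<in> T then f k else 0) (\<lambda>k. if k \<in> T then f k else 0)" for f
    unfolding qform_def mask_def by (intro sum.cong refl) auto
  then show ?thesis using assms unfolding psd_iff_qform by simp
qed

lemma dual_cone_carrier: "M \<in> dual_cone n R \<Longrightarrow> M \<in> carrier_mat n n"
  unfolding dual_cone_def E_space_def by blast

lemma dual_cone_outside: "M \<in> dual_cone n R \<Longrightarrow> i < n \<Longrightarrow> j < n \<Longrightarrow> (i, j) \<notin> R \<Longrightarrow> M $$ (i, j) = 0"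
  unfolding dual_cone_def E_space_def by blast

lemma dual_cone_E:
  assumes "M \<in> dual_cone n R"
  obtains P where "psd n P" "\<And>i j. i < n \<Longrightarrow> j < n \<Longrightarrow> (i, j) \<in> R \<Longrightarrow> P $$ (i, j) = M $$ (i, j)"
proof -
  obtain N where N: "N \<in> carrier_mat n n" "\<forall>i<n. \<forall>j<n. (i, j) \<in> R \<longrightarrow> N $$ (i, j) = 0" "psd n (M + N)"
    using assms unfolding dual_cone_def by blast
  show thesis
    by (rule that[OF N(3)]) (use N(1,2) dual_cone_carrier[OF assms] in auto)
qed

lemma dual_cone_I:
  assumes "M \<in> carrier_mat n n" "\<And>i j. i < n \<Longrightarrow> j < n \<Longrightarrow> (i, j) \<notin> R \<Longrightarrow> M $$ (i, j) = 0"
    and "psd n P" "\<And>i j. i < n \<Longrightarrow> j < n \<Longrightarrow> (i, j) \<in> R \<Longrightarrow> P $$ (i, j) = M $$ (i, j)"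
  shows "M \<in> dual_cone n R"
proof -
  have P: "P \<in> carrier_mat n n" using assms(3) psd_def by blast
  have "M + (P - M) = P" by (rule eq_matI) (use assms(1) P in auto)
  then have "psd n (M + (P - M))" using assms(3) by simp
  moreover have "\<forall>i<n. \<forall>j<n. (i, j) \<in> R \<longrightarrow> (P - M) $$ (i, j) = 0" using assms(1,4) P by auto
  moreover have "P - M \<in> carrier_mat n n" by (rule minus_carrier_mat[OF assms(1)])
  moreover have "M \<in> E_space n R" unfolding E_space_def using assms(1,2) by blast
  ultimately show ?thesis unfolding dual_cone_def by blast
qed

lemma mask_in_dual_cone:
  assumes "psd n P"
  shows "mask n R P \<in> dual_cone n R"
  by (rule dual_cone_I[OF _ _ assms]) (auto simp: mask_def)

lemma mask_square_in_dual_cone: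
  assumes "M \<in> dual_cone n R"
  shows "mask n (T \<times> T) M \<in> dual_cone n R"
proof -
  obtain P where P: "psd n P" "\<And>i j. i < n \<Longrightarrow> j < n \<Longrightarrow> (i, j) \<in> R \<Longrightarrow> P $$ (i, j) = M $$ (i, j)"
    using dual_cone_E[OF assms] by blast
  show ?thesis
    by (rule dual_cone_I[OF _ _ psd_mask_square[OF P(1)]])
      (auto simp: mask_def P(2) dual_cone_outside[OF assms])
qed

lemma tolerance_relD:
  assumes "tolerance_rel n R"
  shows "i < n \<Longrightarrow> (i, i) \<in> R" "(i, j) \<in> R \<Longrightarrow> (j, i) \<in> R" "(i, j) \<in> R \<Longrightarrow> i < n \<and> j < n"
  using assms unfolding tolerance_rel_def by auto

lemma dual_cone_psd2:
  assumes tol: "tolerance_rel n R" and M: "M \<in> dual_cone n R" and ij: "adj R i j"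
  shows "psd2 (M $$ (i, i)) (M $$ (i, j)) (M $$ (j, i)) (M $$ (j, j))"
proof -
  obtain P where P: "psd n P" "\<And>i j. i < n \<Longrightarrow> j < n \<Longrightarrow> (i, j) \<in> R \<Longrightarrow> P $$ (i, j) = M $$ (i, j)"
    using dual_cone_E[OF M] by blast
  have "(i, j) \<in> R" "i \<noteq> j" using ij unfolding adj_def by auto
  with tolerance_relD[OF tol] have "i < n" "j < n" "(i, i) \<in> R" "(j, j) \<in> R" "(j, i) \<in> R" by auto
  with psd_principal_psd2[OF P(1) _ _ \<open>i \<noteq> j\<close>] P(2) \<open>(i, j) \<in> R\<close> show ?thesis by metis
qed

lemma dual_cone_diag_nonneg:
  assumes tol: "tolerance_rel n R" and M: "M \<in> dual_cone n R" and i: "i < n"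
  shows "Im (M $$ (i, i)) = 0 \<and> 0 \<le> Re (M $$ (i, i))"
proof -
  obtain P where P: "psd n P" "\<And>i j. i < n \<Longrightarrow> j < n \<Longrightarrow> (i, j) \<in> R \<Longrightarrow> P $$ (i, j) = M $$ (i, j)"
    using dual_cone_E[OF M] by blast
  show ?thesis using psd_diag_nonneg[OF P(1) i] P(2)[OF i i tolerance_relD(1)[OF tol i]] by simp
qed

lemma dual_cone_zero_diag:
  assumes tol: "tolerance_rel n R" and M: "M \<in> dual_cone n R" and ij: "i < n" "j < n"
    and zero: "M $$ (i, i) = 0"
  shows "M $$ (i, j) = 0 \<and> M $$ (j, i) = 0"
proof (cases "adj R i j")
  case True
  then show ?thesis using psd2_zero_diag[OF dual_cone_psd2[OF tol M True] zero] by blast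
next
  case False
  then have "i = j \<or> (i, j) \<notin> R \<and> (j, i) \<notin> R" using tolerance_relD(2)[OF tol] unfolding adj_def by blast
  then show ?thesis using zero dual_cone_outside[OF M] ij by auto
qed

lemma dual_cone_nonzero_diag:
  assumes tol: "tolerance_rel n R" and M: "M \<in> dual_cone n R" and nonzero: "M \<noteq> 0\<^sub>m n n"
  shows "\<exists>i<n. M $$ (i, i) \<noteq> 0"
proof (rule ccontr)
  assume zero: "\<not> (\<exists>i<n. M $$ (i, i) \<noteq> 0)"
  have "M = 0\<^sub>m n n"
  proof (rule eq_matI)
    fix i j assume "i < dim_row (0\<^sub>m n n :: complex mat)" "j < dim_col (0\<^sub>m n n :: complex mat)"
    then show "M $$ (i, j) = 0\<^sub>m n n $$ (i, j)" using dual_cone_zero_diag[OF tol M, of i j] zero by simp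
  qed (use dual_cone_carrier[OF M] in auto)
  then show False using nonzero by simp
qed

section \<open>Minors and cliques\<close>

lemma det_2x2:
  assumes "(A :: 'a :: comm_ring_1 mat) \<in> carrier_mat 2 2"
  shows "det A = A $$ (0, 0) * A $$ (1, 1) - A $$ (0, 1) * A $$ (1, 0)"
proof -
  have "det A = (\<Sum>j<2. A $$ (0, j) * cofactor A 0 j)"
    by (rule laplace_expansion_row[OF assms]) simp
  also have "\<dots> = A $$ (0, 0) * A $$ (1, 1) - A $$ (0, 1) * A $$ (1, 0)"
    using assms by (simp add: numeral_2_eq_2 cofactor_def det_def mat_delete_def)
  finally show ?thesis .
qed

lemma rank_le_1_imp_minor_zero:
  fixes A :: "'a :: field mat"
  assumes A: "A \<in> carrier_mat m nc" and rank: "vec_space.rank m A \<le> 1"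
    and rows: "a < b" "b < m" and cols: "c < d" "d < nc"
  shows "A $$ (a, c) * A $$ (b, d) = A $$ (a, d) * A $$ (b, c)"
proof (rule ccontr)
  assume nonsingular: "A $$ (a, c) * A $$ (b, d) \<noteq> A $$ (a, d) * A $$ (b, c)"
  define B where "B = submatrix A {a, b} {c, d}"
  have dims: "{k. k < dim_row A \<and> k \<in> {a, b}} = {a, b}" "{k. k < dim_col A \<and> k \<in> {c, d}} = {c, d}"
    using A rows cols by auto
  have two: "card {a, b} = 2" "card {c, d} = 2" using rows cols by auto
  have B: "B \<in> carrier_mat 2 2"
    unfolding B_def by (rule carrier_matI) (simp_all only: dim_submatrix dims two)
  have pos: "{x \<in> {a, b}. x < a} = {}" "{x \<in> {a, b}. x < b} = {a}"
    "{x \<in> {c, d}. x < c} = {}" "{x \<in> {c, d}. x < d} = {c}"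
    using rows cols by auto
  have index: "B $$ (card {x \<in> {a, b}. x < k}, card {x \<in> {c, d}. x < l}) = A $$ (k, l)"
    if "k \<in> {a, b}" "l \<in> {c, d}" for k l
    unfolding B_def by (rule submatrix_index_card) (use that A rows cols in auto)
  have "B $$ (0, 0) = A $$ (a, c)" "B $$ (1, 1) = A $$ (b, d)"
    "B $$ (0, 1) = A $$ (a, d)" "B $$ (1, 0) = A $$ (b, c)"
    using index[of a c] index[of b d] index[of a d] index[of b c] unfolding pos by simp_all
  then have "det B \<noteq> 0" using det_2x2[OF B] nonsingular by simp
  then have "card {k. k < nc \<and> k \<in> {c, d}} \<le> vec_space.rank m A"
    using vec_space.rank_gt_minor[OF A] unfolding B_def by blast
  moreover have "{k. k < nc \<and> k \<in> {c, d}} = {c, d}" using cols by auto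
  ultimately show False using rank cols by simp
qed

lemma submatrix_square_carrier:
  assumes "M \<in> carrier_mat n n" "C \<subseteq> {0..<n}"
  shows "submatrix M C C \<in> carrier_mat (card C) (card C)"
proof -
  have "{k. k < n \<and> k \<in> C} = C" using assms(2) by auto
  then show ?thesis using assms(1) by (intro carrier_matI) (simp_all add: dim_submatrix)
qed

lemma rank_submatrix_le_1_imp_minor_zero:
  fixes M :: "'a :: field mat"
  assumes M: "M \<in> carrier_mat n n" and C: "C \<subseteq> {0..<n}"
    and rank: "vec_space.rank (card C) (submatrix M C C) \<le> 1" and ij: "i \<in> C" "j \<in> C"
  shows "M $$ (i, i) * M $$ (j, j) = M $$ (i, j) * M $$ (j, i)"
proof -
  have less: "M $$ (i, i) * M $$ (j, j) = M $$ (i, j) * M $$ (j, i)"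
    if ij: "i \<in> C" "j \<in> C" "i < j" for i j
  proof -
    define a b where "a = card {x \<in> C. x < i}" and "b = card {x \<in> C. x < j}"
    have fin: "finite C" using C finite_subset by blast
    have ab: "a < b" unfolding a_def b_def using ij fin by (intro psubset_card_mono) auto
    have b: "b < card C" unfolding b_def using ij fin by (intro psubset_card_mono) auto
    have index: "submatrix M C C $$ (card {x \<in> C. x < k}, card {x \<in> C. x < l}) = M $$ (k, l)"
      if "k \<in> C" "l \<in> C" for k l
    proof -
      have "k < n" "l < n" using that C by auto
      then show ?thesis using submatrix_index_card[of k M l C C] that M by simp
    qed
    show ?thesis
      using rank_le_1_imp_minor_zero[OF submatrix_square_carrier[OF M C] rank ab b ab b]
      unfolding a_def b_def index[OF ij(1) ij(1)] index[OF ij(2) ij(2)]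
        index[OF ij(1) ij(2)] index[OF ij(2) ij(1)] .
  qed
  consider "i < j" | "i = j" | "j < i" by linarith
  then show ?thesis using less[OF ij] less[OF ij(2,1)] by cases (simp_all add: mult.commute)
qed

lemma rank_submatrix_le_1_if_product:
  fixes M :: "'a :: field mat"
  assumes M: "M \<in> carrier_mat n n" and C: "C \<subseteq> {0..<n}"
    and product: "\<And>i j. i \<in> C \<Longrightarrow> j \<in> C \<Longrightarrow> M $$ (i, j) = u i * v j"
  shows "vec_space.rank (card C) (submatrix M C C) \<le> 1"
proof (rule vec_space.rank_le_1_product_entries[OF submatrix_square_carrier[OF M C]])
  have dims: "{k. k < dim_row M \<and> k \<in> C} = C" "{k. k < dim_col M \<and> k \<in> C} = C" using M C by auto
  fix r s assume "r < dim_row (submatrix M C C)" "s < dim_col (submatrix M C C)"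
  then have "r < card C" "s < card C" by (simp_all add: dim_submatrix dims)
  then show "submatrix M C C $$ (r, s) = (u \<circ> pick C) r * (v \<circ> pick C) s"
    using submatrix_index[of r M C s C] product pick_in_set_le by (simp add: dims)
qed

lemma maximal_cliques_subset: "C \<in> maximal_cliques n R \<Longrightarrow> C \<subseteq> {0..<n}"
  unfolding maximal_cliques_def is_clique_def by blast

lemma maximal_cliques_adj: "C \<in> maximal_cliques n R \<Longrightarrow> i \<in> C \<Longrightarrow> j \<in> C \<Longrightarrow> i \<noteq> j \<Longrightarrow> adj R i j"
  unfolding maximal_cliques_def is_clique_def by simp

lemma is_clique_in_maximal_clique:
  assumes "is_clique n R D"
  obtains C where "C \<in> maximal_cliques n R" "D \<subseteq> C"
proof -
  let ?A = "{C. is_clique n R C \<and> D \<subseteq> C}"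
  have "finite ?A"
    by (rule finite_subset[of _ "Pow {0..<n}"]) (auto simp: is_clique_def)
  moreover have "?A \<noteq> {}" using assms by blast
  ultimately obtain C where C: "C \<in> ?A" "\<forall>C'\<in>?A. C \<subseteq> C' \<longrightarrow> C = C'"
    by (meson finite_has_maximal)
  have "C \<in> maximal_cliques n R" unfolding maximal_cliques_def using C by auto
  then show thesis by (rule that) (use C(1) in simp)
qed

lemma adj_in_maximal_clique:
  assumes tol: "tolerance_rel n R" and "adj R i j"
  obtains C where "C \<in> maximal_cliques n R" "i \<in> C" "j \<in> C"
proof -
  have "is_clique n R {i, j}"
    using assms tolerance_relD(2,3)[OF tol, of i j] unfolding is_clique_def adj_def by auto
  then obtain C where "C \<in> maximal_cliques n R" "{i, j} \<subseteq> C" by (rule is_clique_in_maximal_clique)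
  then show thesis by (intro that) auto
qed

section \<open>Sufficiency\<close>

lemma dual_cone_sum_zero_diag:
  assumes tol: "tolerance_rel n R" and A: "A \<in> dual_cone n R" and B: "B \<in> dual_cone n R"
    and i: "i < n" and zero: "A $$ (i, i) + B $$ (i, i) = 0"
  shows "A $$ (i, i) = 0"
proof -
  have "Im (A $$ (i, i)) = 0 \<and> 0 \<le> Re (A $$ (i, i))" "Im (B $$ (i, i)) = 0 \<and> 0 \<le> Re (B $$ (i, i))"
    using dual_cone_diag_nonneg[OF tol A i] dual_cone_diag_nonneg[OF tol B i] by blast+
  moreover have "Re (A $$ (i, i)) + Re (B $$ (i, i)) = 0" using arg_cong[OF zero, of Re] by simp
  ultimately show ?thesis by (simp add: complex_eq_iff)
qed

lemma dual_cone_eq_smult: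
  assumes tol: "tolerance_rel n R" and M: "M \<in> dual_cone n R" and A: "A \<in> dual_cone n R"
    and off_support: "\<And>i. i < n \<Longrightarrow> M $$ (i, i) = 0 \<Longrightarrow> A $$ (i, i) = 0"
    and on_support: "\<And>i j. (i, j) \<in> R \<Longrightarrow> M $$ (i, i) \<noteq> 0 \<Longrightarrow> M $$ (j, j) \<noteq> 0 \<Longrightarrow>
      A $$ (i, j) = t * M $$ (i, j)"
  shows "A = t \<cdot>\<^sub>m M"
proof (rule eq_matI)
  have carrier: "M \<in> carrier_mat n n" "A \<in> carrier_mat n n"
    using dual_cone_carrier M A by blast+
  then show "dim_row A = dim_row (t \<cdot>\<^sub>m M)" "dim_col A = dim_col (t \<cdot>\<^sub>m M)" by simp_all
  fix i j assume "i < dim_row (t \<cdot>\<^sub>m M)" "j < dim_col (t \<cdot>\<^sub>m M)"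
  then have ij: "i < n" "j < n" using carrier by auto
  consider "M $$ (i, i) = 0" | "M $$ (j, j) = 0" | "(i, j) \<notin> R"
    | "(i, j) \<in> R" "M $$ (i, i) \<noteq> 0" "M $$ (j, j) \<noteq> 0" by blast
  then show "A $$ (i, j) = (t \<cdot>\<^sub>m M) $$ (i, j)"
  proof cases
    case 1
    then show ?thesis using dual_cone_zero_diag[OF tol A ij off_support[OF ij(1) 1]]
        dual_cone_zero_diag[OF tol M ij 1] ij carrier by simp
  next
    case 2
    then show ?thesis using dual_cone_zero_diag[OF tol A ij(2,1) off_support[OF ij(2) 2]]
        dual_cone_zero_diag[OF tol M ij(2,1) 2] ij carrier by simp
  next
    case 3
    then show ?thesis using dual_cone_outside[OF A ij] dual_cone_outside[OF M ij] ij carrier by simp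
  next
    case 4
    then show ?thesis using on_support ij carrier by simp
  qed
qed

lemma mat_in_ray: "M \<in> carrier_mat n n \<Longrightarrow> M \<in> ray M"
  unfolding ray_def by (rule CollectI, rule exI[of _ 1]) auto

lemma dual_cone_summand_in_ray:
  assumes tol: "tolerance_rel n R" and M: "M \<in> dual_cone n R" and nonzero: "M \<noteq> 0\<^sub>m n n"
    and rank: "\<forall>C \<in> maximal_cliques n R. vec_space.rank (card C) (submatrix M C C) \<le> 1"
    and conn: "induced_connected R {i. i < n \<and> M $$ (i, i) \<noteq> 0}"
    and A: "A \<in> dual_cone n R" and B: "B \<in> dual_cone n R" and sum: "A + B \<in> ray M"
  shows "A \<in> ray M"
proof -
  obtain c where c: "A + B = complex_of_real c \<cdot>\<^sub>m M" using sum unfolding ray_def by blast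
  have sum: "A $$ (i, j) + B $$ (i, j) = complex_of_real c * M $$ (i, j)" if "i < n" "j < n" for i j
    using arg_cong[OF c, of "\<lambda>X. X $$ (i, j)"] that
      dual_cone_carrier[OF A] dual_cone_carrier[OF B] dual_cone_carrier[OF M] by simp
  define S where "S = {i. i < n \<and> M $$ (i, i) \<noteq> 0}"
  define r where "r i = A $$ (i, i) / M $$ (i, i)" for i
  have edge: "A $$ (i, j) = r i * M $$ (i, j) \<and> r j = r i" if ij: "i \<in> S" "j \<in> S" "adj R i j" for i j
  proof -
    obtain C where C: "C \<in> maximal_cliques n R" "i \<in> C" "j \<in> C"
      using adj_in_maximal_clique[OF tol ij(3)] by blast
    have "M $$ (i, i) * M $$ (j, j) = M $$ (i, j) * M $$ (j, i)"
      using rank_submatrix_le_1_imp_minor_zero[OF dual_cone_carrier[OF M] maximal_cliques_subset[OF C(1)]]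
        rank C by blast
    then show ?thesis
      using psd2_summand_of_singular[OF dual_cone_psd2[OF tol M ij(3)] dual_cone_psd2[OF tol A ij(3)]
          dual_cone_psd2[OF tol B ij(3)]] sum ij(1,2) unfolding S_def r_def by auto
  qed
  obtain u where u: "u \<in> S" using dual_cone_nonzero_diag[OF tol M nonzero] unfolding S_def by blast
  have ratio_constant: "r v = r u" if "v \<in> S" for v
  proof -
    have "(u, v) \<in> {(i, j). i \<in> S \<and> j \<in> S \<and> adj R i j}\<^sup>*"
      using conn u that unfolding induced_connected_def S_def by blast
    then show ?thesis by (induction rule: rtrancl_induct) (use edge in auto)
  qed
  obtain t where t: "r u = complex_of_real t" "t \<ge> 0"
  proof -
    have "u < n" using u S_def by simp
    note diag = dual_cone_diag_nonneg[OF tol A this] dual_cone_diag_nonneg[OF tol M this]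
    then have "A $$ (u, u) = Re (A $$ (u, u))" "M $$ (u, u) = Re (M $$ (u, u))"
      by (simp_all add: complex_eq_iff)
    then have "r u = complex_of_real (Re (A $$ (u, u)) / Re (M $$ (u, u)))"
      unfolding r_def by (metis of_real_divide)
    moreover have "Re (A $$ (u, u)) / Re (M $$ (u, u)) \<ge> 0" using diag by simp
    ultimately show thesis by (rule that)
  qed
  have "A = complex_of_real t \<cdot>\<^sub>m M"
  proof (rule dual_cone_eq_smult[OF tol M A])
    show "A $$ (i, i) = 0" if "i < n" "M $$ (i, i) = 0" for i
      using dual_cone_sum_zero_diag[OF tol A B that(1)] sum[OF that(1) that(1)] that(2) by simp
    show "A $$ (i, j) = complex_of_real t * M $$ (i, j)"
      if "(i, j) \<in> R" "M $$ (i, i) \<noteq> 0" "M $$ (j, j) \<noteq> 0" for i j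
    proof -
      have ij: "i \<in> S" "j \<in> S" using that tolerance_relD(3)[OF tol] unfolding S_def by auto
      show ?thesis
      proof (cases "i = j")
        case True
        then show ?thesis using ratio_constant[OF ij(1)] t that(2) unfolding r_def by (simp add: field_simps)
      next
        case False
        then show ?thesis using edge[OF ij] that(1) ratio_constant[OF ij(1)] t unfolding adj_def by simp
      qed
    qed
  qed
  then show ?thesis using t(2) unfolding ray_def by blast
qed

lemma extremal_ray_if_rank_le_1_connected:
  assumes tol: "tolerance_rel n R" and M: "M \<in> dual_cone n R" and nonzero: "M \<noteq> 0\<^sub>m n n"
    and rank: "\<forall>C \<in> maximal_cliques n R. vec_space.rank (card C) (submatrix M C C) \<le> 1"
    and conn: "induced_connected R {i. i < n \<and> M $$ (i, i) \<noteq> 0}"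
  shows "extremal_ray (dual_cone n R) M"
  unfolding extremal_ray_def
proof (intro conjI ballI impI)
  show "M \<in> dual_cone n R" by (rule M)
  show "M \<noteq> 0\<^sub>m (dim_row M) (dim_col M)" using nonzero dual_cone_carrier[OF M] by auto
  fix A B assume A: "A \<in> dual_cone n R" and B: "B \<in> dual_cone n R" and sum: "A + B \<in> ray M"
  have "B + A \<in> ray M" using sum comm_add_mat[OF dual_cone_carrier[OF A] dual_cone_carrier[OF B]] by simp
  then show "A \<in> ray M" "B \<in> ray M"
    using dual_cone_summand_in_ray[OF tol M nonzero rank conn] A B sum by blast+
qed

section \<open>Necessity\<close>

lemma qform_diff:
  assumes "A \<in> carrier_mat n n" "B \<in> carrier_mat n n"
  shows "qform n (A - B) f f = qform n A f f - qform n B f f"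
  unfolding qform_def using assms by (simp add: sum_subtractf[symmetric] algebra_simps)

lemma qform_shift:
  "qform n A (\<lambda>k. f k + t * e k) (\<lambda>k. f k + t * e k)
     = qform n A f f + t * qform n A f e + cnj t * qform n A e f + cnj t * t * qform n A e e"
proof -
  have "cnj (f i + t * e i) * A $$ (i, j) * (f j + t * e j)
      = cnj (f i) * A $$ (i, j) * f j + t * (cnj (f i) * A $$ (i, j) * e j)
        + cnj t * (cnj (e i) * A $$ (i, j) * f j) + cnj t * t * (cnj (e i) * A $$ (i, j) * e j)" for i j
    by (simp add: algebra_simps)
  then show ?thesis unfolding qform_def by (simp add: sum.distrib sum_distrib_left)
qed

lemma qform_unit_left:
  assumes "k < n"
  shows "qform n A (\<lambda>i. if i = k then 1 else 0) g = (\<Sum>j<n. A $$ (k, j) * g j)"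
proof -
  have "(\<Sum>j<n. cnj (if i = k then 1 else 0) * A $$ (i, j) * g j)
      = (if i = k then \<Sum>j<n. A $$ (k, j) * g j else 0)" for i
    by simp
  then show ?thesis unfolding qform_def using assms by simp
qed

lemma qform_unit_right:
  assumes "k < n"
  shows "qform n A f (\<lambda>j. if j = k then 1 else 0) = (\<Sum>i<n. cnj (f i) * A $$ (i, k))"
  unfolding qform_def using assms by (simp add: if_distrib cong: if_cong)

definition schur_part :: "nat \<Rightarrow> complex mat \<Rightarrow> nat \<Rightarrow> complex mat" where
  "schur_part n P k = mat n n (\<lambda>(i, j). P $$ (i, k) * P $$ (k, j) / P $$ (k, k))"

lemma qform_schur_part:
  assumes P: "psd n P" and k: "k < n"
  shows "qform n (schur_part n P k) f f
    = cnj (\<Sum>j<n. P $$ (k, j) * f j) * (\<Sum>j<n. P $$ (k, j) * f j) / P $$ (k, k)"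
proof -
  have "qform n (schur_part n P k) f f
      = (\<Sum>i<n. \<Sum>j<n. (cnj (f i) * P $$ (i, k)) * (P $$ (k, j) * f j) / P $$ (k, k))"
    unfolding qform_def schur_part_def by (intro sum.cong refl) (simp add: algebra_simps)
  also have "\<dots> = (\<Sum>i<n. cnj (f i) * P $$ (i, k)) * (\<Sum>j<n. P $$ (k, j) * f j) / P $$ (k, k)"
    by (simp add: sum_product sum_divide_distrib)
  also have "(\<Sum>i<n. cnj (f i) * P $$ (i, k)) = cnj (\<Sum>j<n. P $$ (k, j) * f j)"
    unfolding cnj_sum by (intro sum.cong refl) (simp add: psd_hermitian[OF P k] mult.commute)
  finally show ?thesis .
qed

lemma psd_schur_part:
  assumes P: "psd n P" and k: "k < n" and pivot: "P $$ (k, k) \<noteq> 0"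
  shows "psd n (schur_part n P k)"
  unfolding psd_iff_qform
proof (intro conjI allI)
  fix f
  define w where "w = (\<Sum>j<n. P $$ (k, j) * f j)"
  have "P $$ (k, k) = Re (P $$ (k, k))" "Re (P $$ (k, k)) > 0"
    using psd_diag_nonneg[OF P k] pivot by (auto simp: complex_eq_iff less_eq_real_def)
  moreover have "cnj w * w = complex_of_real ((cmod w)\<^sup>2)" by (metis complex_norm_square mult.commute)
  ultimately have "qform n (schur_part n P k) f f = complex_of_real ((cmod w)\<^sup>2 / Re (P $$ (k, k)))"
    "(cmod w)\<^sup>2 / Re (P $$ (k, k)) \<ge> 0"
    unfolding qform_schur_part[OF P k] w_def[symmetric] by (metis of_real_divide, simp)
  then show "qform n (schur_part n P k) f f \<in> \<real>" "0 \<le> Re (qform n (schur_part n P k) f f)"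
    by simp_all
qed (simp add: schur_part_def)

lemma psd_minus_schur_part:
  assumes P: "psd n P" and k: "k < n" and pivot: "P $$ (k, k) \<noteq> 0"
  shows "psd n (P - schur_part n P k)"
  unfolding psd_iff_qform
proof (intro conjI allI)
  have carrier: "P \<in> carrier_mat n n" "schur_part n P k \<in> carrier_mat n n"
    using P psd_def by (auto simp: schur_part_def)
  then show "P - schur_part n P k \<in> carrier_mat n n" by (metis minus_carrier_mat)
  fix f
  define w where "w = (\<Sum>j<n. P $$ (k, j) * f j)"
  define e where "e i = (if i = k then 1 else 0 :: complex)" for i
  \<comment> \<open>completing the square in the k-th coordinate\<close>
  define t where "t = - w / P $$ (k, k)"
  have real: "cnj (P $$ (k, k)) = P $$ (k, k)" using psd_diag_nonneg[OF P k] by (simp add: complex_eq_iff)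
  have "qform n P f e = cnj w"
    unfolding e_def qform_unit_right[OF k] w_def cnj_sum
    by (intro sum.cong refl) (simp add: psd_hermitian[OF P k] mult.commute)
  moreover have "qform n P e f = w" "qform n P e e = P $$ (k, k)"
    unfolding e_def qform_unit_left[OF k] w_def by (simp_all add: k if_distrib cong: if_cong)
  ultimately have "qform n P (\<lambda>i. f i + t * e i) (\<lambda>i. f i + t * e i)
      = qform n P f f - cnj w * w / P $$ (k, k)"
    unfolding qform_shift t_def using pivot real by (simp add: field_simps)
  also have "\<dots> = qform n (P - schur_part n P k) f f"
    unfolding qform_diff[OF carrier] qform_schur_part[OF P k] w_def ..
  finally show "qform n (P - schur_part n P k) f f \<in> \<real>" "0 \<le> Re (qform n (P - schur_part n P k) f f)"
    using P unfolding psd_iff_qform by metis+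
qed

lemma extremal_ray_imp_rank_le_1:
  assumes tol: "tolerance_rel n R" and M: "M \<in> dual_cone n R" and nonzero: "M \<noteq> 0\<^sub>m n n"
    and extremal: "extremal_ray (dual_cone n R) M"
    and C: "C \<in> maximal_cliques n R"
  shows "vec_space.rank (card C) (submatrix M C C) \<le> 1"
proof -
  obtain P where P: "psd n P" "\<And>i j. i < n \<Longrightarrow> j < n \<Longrightarrow> (i, j) \<in> R \<Longrightarrow> P $$ (i, j) = M $$ (i, j)"
    using dual_cone_E[OF M] by blast
  obtain k where k: "k < n" "M $$ (k, k) \<noteq> 0" using dual_cone_nonzero_diag[OF tol M nonzero] by blast
  have pivot: "P $$ (k, k) = M $$ (k, k)" using P(2) k(1) tolerance_relD(1)[OF tol] by blast
  define Q where "Q = schur_part n P k"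
  have carrier: "M \<in> carrier_mat n n" "P \<in> carrier_mat n n" "Q \<in> carrier_mat n n"
    using dual_cone_carrier[OF M] P(1) psd_def by (auto simp: Q_def schur_part_def)
  have "mask n R Q + mask n R (P - Q) = M"
    using carrier P(2) dual_cone_outside[OF M] by (intro eq_matI) (auto simp: mask_def)
  moreover have "mask n R Q \<in> dual_cone n R" "mask n R (P - Q) \<in> dual_cone n R"
    unfolding Q_def using pivot k
    by (simp_all add: mask_in_dual_cone psd_schur_part psd_minus_schur_part P(1))
  ultimately have "mask n R Q \<in> ray M"
    using extremal mat_in_ray[OF carrier(1)] unfolding extremal_ray_def by metis
  then obtain c where c: "mask n R Q = complex_of_real c \<cdot>\<^sub>m M" unfolding ray_def by blast
  have entry: "Q $$ (i, j) = complex_of_real c * M $$ (i, j)" if "(i, j) \<in> R" for i j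
    using arg_cong[OF c, of "\<lambda>X. X $$ (i, j)"] that tolerance_relD(3)[OF tol that] carrier(1)
    by (simp add: mask_def)
  have "Q $$ (k, k) = M $$ (k, k)" using k pivot by (simp add: Q_def schur_part_def)
  then have c_nonzero: "complex_of_real c \<noteq> 0" using entry[OF tolerance_relD(1)[OF tol k(1)]] k(2) by auto
  have "M $$ (i, j) = P $$ (i, k) / (complex_of_real c * P $$ (k, k)) * P $$ (k, j)"
    if "i \<in> C" "j \<in> C" for i j
  proof -
    have ij: "(i, j) \<in> R"
      using that maximal_cliques_adj[OF C] maximal_cliques_subset[OF C] tolerance_relD(1)[OF tol]
      unfolding adj_def by (cases "i = j") auto
    then have "i < n" "j < n" using tolerance_relD(3)[OF tol] by auto
    then have "complex_of_real c * M $$ (i, j) = P $$ (i, k) * P $$ (k, j) / P $$ (k, k)"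
      using entry[OF ij] by (simp add: Q_def schur_part_def)
    then show ?thesis using c_nonzero pivot k(2) by (simp add: field_simps)
  qed
  then show ?thesis
    by (rule rank_submatrix_le_1_if_product[OF carrier(1) maximal_cliques_subset[OF C]])
qed

lemma extremal_ray_imp_support_connected:
  assumes tol: "tolerance_rel n R" and M: "M \<in> dual_cone n R"
    and extremal: "extremal_ray (dual_cone n R) M"
  shows "induced_connected R {i. i < n \<and> M $$ (i, i) \<noteq> 0}"
proof -
  define S where "S = {i. i < n \<and> M $$ (i, i) \<noteq> 0}"
  define E where "E = {(i, j). i \<in> S \<and> j \<in> S \<and> adj R i j}"
  have carrier: "M \<in> carrier_mat n n" by (rule dual_cone_carrier[OF M])
  have "(u, v) \<in> E\<^sup>*" if u: "u \<in> S" and v: "v \<in> S" for u v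
  proof (rule ccontr)
    assume unreachable: "(u, v) \<notin> E\<^sup>*"
    define T where "T = {k. (u, k) \<in> E\<^sup>*}"
    have across: "M $$ (i, j) = 0 \<and> M $$ (j, i) = 0" if ij: "i < n" "j < n" "i \<in> T" "j \<notin> T" for i j
    proof -
      consider "adj R i j" "i \<in> S" "j \<in> S" | "\<not> adj R i j" | "M $$ (i, i) = 0" | "M $$ (j, j) = 0"
        using ij unfolding S_def by blast
      then show ?thesis
      proof cases
        case 1
        then have "(u, j) \<in> E\<^sup>*" using ij(3) unfolding T_def E_def by (auto intro: rtrancl_into_rtrancl)
        then show ?thesis using ij(4) unfolding T_def by blast
      next
        case 2
        then have "(i, j) \<notin> R" "(j, i) \<notin> R" using ij(3,4) tolerance_relD(2)[OF tol] unfolding adj_def by auto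
        then show ?thesis using dual_cone_outside[OF M] ij(1,2) by blast
      qed (use dual_cone_zero_diag[OF tol M] ij(1,2) in blast)+
    qed
    have "mask n (T \<times> T) M + mask n ((- T) \<times> (- T)) M = M"
      using carrier across by (intro eq_matI) (auto simp: mask_def)
    then have "mask n (T \<times> T) M \<in> ray M"
      using extremal mat_in_ray[OF carrier] mask_square_in_dual_cone[OF M]
      unfolding extremal_ray_def by metis
    then obtain c where c: "mask n (T \<times> T) M = complex_of_real c \<cdot>\<^sub>m M" unfolding ray_def by blast
    have "u \<in> T" "v \<notin> T" using unreachable unfolding T_def by auto
    then have "M $$ (u, u) = complex_of_real c * M $$ (u, u)" "0 = complex_of_real c * M $$ (v, v)"
      using arg_cong[OF c, of "\<lambda>X. X $$ (u, u)"] arg_cong[OF c, of "\<lambda>X. X $$ (v, v)"] u v carrier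
      unfolding S_def by (auto simp: mask_def)
    then show False using u v unfolding S_def by auto
  qed
  then show ?thesis unfolding induced_connected_def S_def E_def by blast
qed

theorem mainTheorem3:
  fixes n :: nat and R :: "(nat \<times> nat) set" and M :: "complex mat"
  assumes "tolerance_rel n R"
    and "chordal n R"
    and "M \<in> dual_cone n R"
    and "M \<noteq> 0\<^sub>m n n"
  shows "extremal_ray (dual_cone n R) M \<longleftrightarrow>
    ((\<forall>C \<in> maximal_cliques n R. vec_space.rank (card C) (submatrix M C C) \<le> 1)
     \<and> induced_connected R {i. i < n \<and> M $$ (i, i) \<noteq> 0})"
  using extremal_ray_imp_rank_le_1[OF assms(1,3,4)] extremal_ray_imp_support_connected[OF assms(1,3)]
    extremal_ray_if_rank_le_1_connected[OF assms(1,3,4)]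
  by blast

end
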